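(* Let $G=(V,E)$ be a graph and $n\in\mathbb N$. Suppose that for each $i<n$ the set $A_i\subseteq V$ spans an $n$-connected subgraph of $G$, and that there are pairwise distinct points $y_{i,k}$ ($i<n$, $k<n$) and $x_k$ ($k<n$) in $V$ such that $y_{i,k}\in A_i\cap N_G(x_k)$ for all $i<n$, $k<n$. Let $X=\{x_k:k<n\}$. Then $A=\bigcup\{A_i:i<n\}\cup X$ spans an $n$-connected subgraph of $G$.
   Context: A graph is $n$-connected iff the removal of fewer than $n$ vertices leaves it connected. $N_G(v)=\{w\in V:\{v,w\}\in E\}$. *)

theory Defs
  imports Main
begin

definition graph :: "'a set \<Rightarrow> 'a set set \<Rightarrow> bool" where
  "graph V E \<longleftrightarrow> (\<forall>e\<in>E. \<exists>v w. v \<in> V \<and> w \<in> V \<and> v \<noteq> w \<and> e = {v, w})"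

definition neighbors :: "'a set \<Rightarrow> 'a set set \<Rightarrow> 'a \<Rightarrow> 'a set" where
  "neighbors V E v = {w \<in> V. {v, w} \<in> E}"

definition adj_on :: "'a set set \<Rightarrow> 'a set \<Rightarrow> ('a \<times> 'a) set" where
  "adj_on E S = {(a, b). a \<in> S \<and> b \<in> S \<and> {a, b} \<in> E}"

definition connected_on :: "'a set set \<Rightarrow> 'a set \<Rightarrow> bool" where
  "connected_on E S \<longleftrightarrow> (\<forall>u\<in>S. \<forall>v\<in>S. (u, v) \<in> (adj_on E S)\<^sup>*)"

definition n_connected_on :: "'a set set \<Rightarrow> 'a set \<Rightarrow> nat \<Rightarrow> bool" where
  "n_connected_on E S n \<longleftrightarrow>
     (\<forall>R. R \<subseteq> S \<and> finite R \<and> card R < n \<longrightarrow> connected_on E (S - R))"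

end

theory Submission
  imports Defs "HOL-Library.Disjoint_Sets"
begin

text \<open>Fewer than n removed vertices R cannot meet all of the n pairwise disjoint sets
  {x k, y i k, y j k} (k < n), so for any two blocks A i and A j some x k survives together
  with a neighbour of it in each block; as each A i - R is connected, all surviving blocks lie
  in one component. Likewise every surviving x k keeps one of its n neighbours y i k (i < n)
  and is thus attached to a block.\<close>

lemma disjoint_family_on_avoids_small_set:
  assumes "disjoint_family_on T I" "finite R" "card R < card I"
  shows "\<exists>k\<in>I. T k \<inter> R = {}"
proof (rule ccontr)
  assume "\<not> ?thesis"
  then have meets: "\<exists>r. r \<in> T k \<inter> R" if "k \<in> I" for k
    using that by blast
  define f where "f k = (SOME r. r \<in> T k \<inter> R)" for k
  have f: "f k \<in> T k \<inter> R" if "k \<in> I" for k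
    unfolding f_def using someI_ex[OF meets[OF that]] .
  have "inj_on f I"
  proof (rule inj_onI)
    fix a b assume "a \<in> I" "b \<in> I" "f a = f b"
    then have "T a \<inter> T b \<noteq> {}"
      using f by (metis IntD1 disjoint_iff)
    with assms(1) \<open>a \<in> I\<close> \<open>b \<in> I\<close> show "a = b"
      unfolding disjoint_family_on_def by blast
  qed
  with f have "card I \<le> card R"
    using assms(2) by (intro card_inj_on_le) auto
  with assms(3) show False by simp
qed

lemma inj_on_avoids_small_set:
  assumes "inj_on f I" "finite R" "card R < card I"
  shows "\<exists>k\<in>I. f k \<notin> R"
proof -
  have "disjoint_family_on (\<lambda>k. {f k}) I"
    using assms(1) by (auto simp: disjoint_family_on_def inj_on_def)
  then show ?thesis
    using disjoint_family_on_avoids_small_set[OF _ assms(2,3)] by auto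
qed

lemma adj_on_mono: "S \<subseteq> T \<Longrightarrow> adj_on E S \<subseteq> adj_on E T"
  by (auto simp: adj_on_def)

lemma sym_adj_on: "sym (adj_on E S)"
  by (auto simp: sym_def adj_on_def insert_commute)

lemma n_connected_on_connected_on_Diff:
  assumes "n_connected_on E S n" "finite R" "card R < n"
  shows "connected_on E (S - R)"
proof -
  have "card (S \<inter> R) < n"
    using assms(2,3) card_mono[of R "S \<inter> R"] by simp
  then have "connected_on E (S - S \<inter> R)"
    using assms(1,2) unfolding n_connected_on_def by simp
  then show ?thesis
    by (simp add: Diff_Int)
qed

lemma connected_on_rtrancl_adj_on:
  assumes "connected_on E S" "S \<subseteq> T" "u \<in> S" "v \<in> S"
  shows "(u, v) \<in> (adj_on E T)\<^sup>*"
  using assms rtrancl_mono[OF adj_on_mono[OF assms(2)]]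
  unfolding connected_on_def by blast

locale linked_blocks =
  fixes E :: "'a set set" and n :: nat
    and A :: "nat \<Rightarrow> 'a set" and y :: "nat \<Rightarrow> nat \<Rightarrow> 'a" and x :: "nat \<Rightarrow> 'a"
  assumes block_n_connected: "i < n \<Longrightarrow> n_connected_on E (A i) n"
    and y_inj: "inj_on (\<lambda>p. y (fst p) (snd p)) ({..<n} \<times> {..<n})"
    and x_inj: "inj_on x {..<n}"
    and y_neq_x: "i < n \<Longrightarrow> k < n \<Longrightarrow> j < n \<Longrightarrow> y i k \<noteq> x j"
    and y_in_block: "i < n \<Longrightarrow> k < n \<Longrightarrow> y i k \<in> A i"
    and y_adj_x: "i < n \<Longrightarrow> k < n \<Longrightarrow> {x k, y i k} \<in> E"
begin

definition span :: "'a set" where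
  "span = (\<Union>i<n. A i) \<union> x ` {..<n}"

context
  fixes R :: "'a set"
  assumes R_finite: "finite R" and R_small: "card R < n"
begin

abbreviation reach :: "'a \<Rightarrow> 'a \<Rightarrow> bool" where
  "reach u v \<equiv> (u, v) \<in> (adj_on E (span - R))\<^sup>*"

lemma reach_sym: "reach u v \<Longrightarrow> reach v u"
  by (meson sym_rtrancl sym_adj_on symD)

lemma reach_x_y:
  assumes "i < n" "k < n" "x k \<notin> R" "y i k \<notin> R"
  shows "reach (x k) (y i k)"
proof -
  have "(x k, y i k) \<in> adj_on E (span - R)"
    using assms y_adj_x y_in_block unfolding adj_on_def span_def by blast
  then show ?thesis by blast
qed

lemma reach_within_block:
  assumes "i < n" "u \<in> A i - R" "v \<in> A i - R"
  shows "reach u v"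
  using assms n_connected_on_connected_on_Diff[OF block_n_connected R_finite R_small]
  by (intro connected_on_rtrancl_adj_on) (auto simp: span_def)

lemma free_column:
  assumes "i < n" "j < n"
  shows "\<exists>k<n. x k \<notin> R \<and> y i k \<notin> R \<and> y j k \<notin> R"
proof -
  have "disjoint_family_on (\<lambda>k. {x k, y i k, y j k}) {..<n}"
  proof (unfold disjoint_family_on_def, intro ballI impI)
    fix k k' assume k: "k \<in> {..<n}" "k' \<in> {..<n}" "k \<noteq> k'"
    have "x k \<noteq> x k'"
      using inj_onD[OF x_inj] k by blast
    moreover have "y a k \<noteq> y b k'" if "a < n" "b < n" for a b
      using inj_onD[OF y_inj, of "(a, k)" "(b, k')"] that k by auto
    moreover have "y a k \<noteq> x k'" "x k \<noteq> y a k'" if "a < n" for a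
      using y_neq_x that k by (metis lessThan_iff)+
    ultimately show "{x k, y i k, y j k} \<inter> {x k', y i k', y j k'} = {}"
      using assms by auto
  qed
  then have "\<exists>k\<in>{..<n}. {x k, y i k, y j k} \<inter> R = {}"
    by (rule disjoint_family_on_avoids_small_set[OF _ R_finite]) (simp add: R_small)
  then show ?thesis
    by auto
qed

lemma reach_between_blocks:
  assumes "i < n" "j < n" "u \<in> A i - R" "v \<in> A j - R"
  shows "reach u v"
proof -
  obtain k where k: "k < n" "x k \<notin> R" "y i k \<notin> R" "y j k \<notin> R"
    using free_column[OF assms(1,2)] by blast
  have "reach u (y i k)"
    using reach_within_block assms k y_in_block by blast
  also have "reach (y i k) (x k)"
    using reach_sym[OF reach_x_y] assms k by blast
  also have "reach (x k) (y j k)"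
    using reach_x_y assms k by blast
  also have "reach (y j k) v"
    using reach_within_block assms k y_in_block by blast
  finally show ?thesis .
qed

lemma reach_some_block:
  assumes "u \<in> span - R"
  shows "\<exists>i<n. \<exists>w \<in> A i - R. reach u w"
proof -
  from assms consider i where "i < n" "u \<in> A i - R" | k where "k < n" "u = x k" "x k \<notin> R"
    unfolding span_def by blast
  then show ?thesis
  proof cases
    case 1
    then show ?thesis by blast
  next
    case (2 k)
    have "inj_on (\<lambda>i. y i k) {..<n}"
      using y_inj \<open>k < n\<close> unfolding inj_on_def by auto
    then obtain i where "i < n" "y i k \<notin> R"
      using inj_on_avoids_small_set[OF _ R_finite, of _ "{..<n}"] R_small by auto
    then show ?thesis
      using reach_x_y[of i k] 2 y_in_block by blast
  qed
qed

lemma connected_on_span_Diff: "connected_on E (span - R)"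
  unfolding connected_on_def
proof (intro ballI)
  fix u v assume "u \<in> span - R" "v \<in> span - R"
  then obtain i w j w' where "i < n" "w \<in> A i - R" "reach u w"
    and "j < n" "w' \<in> A j - R" "reach v w'"
    using reach_some_block by meson
  then show "reach u v"
    using reach_between_blocks reach_sym by (meson rtrancl_trans)
qed

end

lemma n_connected_on_span: "n_connected_on E span n"
  unfolding n_connected_on_def using connected_on_span_Diff by blast

end

theorem mainTheorem4:
  fixes V :: "'a set" and E :: "'a set set" and n :: nat
    and A :: "nat \<Rightarrow> 'a set" and y :: "nat \<Rightarrow> nat \<Rightarrow> 'a" and x :: "nat \<Rightarrow> 'a"
  assumes "graph V E"
    and "\<forall>i<n. A i \<subseteq> V \<and> n_connected_on E (A i) n"
    and "\<forall>k<n. x k \<in> V"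
    and "inj_on (\<lambda>p. y (fst p) (snd p)) ({..<n} \<times> {..<n})"
    and "inj_on x {..<n}"
    and "\<forall>i<n. \<forall>k<n. \<forall>j<n. y i k \<noteq> x j"
    and "\<forall>i<n. \<forall>k<n. y i k \<in> A i \<inter> neighbors V E (x k)"
  shows "n_connected_on E ((\<Union>i<n. A i) \<union> x ` {..<n}) n"
proof -
  interpret linked_blocks E n A y x
    using assms(2,4-7) by unfold_locales (auto simp: neighbors_def)
  show ?thesis
    using n_connected_on_span by (simp add: span_def)
qed

end
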